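(* Let $n\ge 3$ be an integer and let $\varphi$ be the automorphism of $F$ with $\varphi(x)=x$, $\varphi(y)=yx$. Then $(\varphi(r_1),\varphi(r_2))\sim_{AC}(r_1,r_2)$, where $(r_1,r_2)=\mathrm{AK}(n)=(xyxy^{-1}x^{-1}y^{-1},\ x^ny^{-(n+1)})$.
   Context: $F=F(x,y)$ is the free group on $\{x,y\}$. The Akbulut–Kurby pair is $\mathrm{AK}(n)=(xyxy^{-1}x^{-1}y^{-1},\ x^{n}y^{-(n+1)})$, i.e. the presentation $\langle x,y\mid xyx=yxy,\ x^n=y^{n+1}\rangle$ of the trivial group. The Andrews–Curtis (AC) moves on a pair $(r_1,r_2)\in F^2$ are: replace $r_i$ by $r_ir_j$ ($i\ne j$); replace $r_i$ by $r_i^{-1}$; replace $r_i$ by $w^{-1}r_iw$ for some $w\in F$. Two pairs are AC-equivalent, $\sim_{AC}$, if one can be obtained from the other by a finite sequence of AC-moves. *)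

theory Defs
  imports Main
begin

text \<open>The free group F(x,y), modelled by freely reduced words.
  A letter is a generator together with an exponent sign (True = +1, False = -1).\<close>

datatype gen = X | Y

type_synonym letter = "gen \<times> bool"
type_synonym word = "letter list"

fun push :: "letter \<Rightarrow> word \<Rightarrow> word" where
  "push a [] = [a]"
| "push a (b # w) = (if fst a = fst b \<and> snd a \<noteq> snd b then w else a # b # w)"

definition red :: "word \<Rightarrow> word" where
  "red w = foldr push w []"

definition fmult :: "word \<Rightarrow> word \<Rightarrow> word" where
  "fmult u v = red (u @ v)"

definition finv :: "word \<Rightarrow> word" where
  "finv w = red (rev (map (\<lambda>(g, s). (g, \<not> s)) w))"

definition gx :: word where "gx = [(X, True)]"
definition gy :: word where "gy = [(Y, True)]"

fun phi_letter :: "letter \<Rightarrow> word" where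
  "phi_letter (X, s) = [(X, s)]"
| "phi_letter (Y, True) = [(Y, True), (X, True)]"
| "phi_letter (Y, False) = [(X, False), (Y, False)]"

definition phi :: "word \<Rightarrow> word" where
  "phi w = red (concat (map phi_letter w))"

inductive ac_move :: "word \<times> word \<Rightarrow> word \<times> word \<Rightarrow> bool" where
  mult1: "ac_move (r1, r2) (fmult r1 r2, r2)"
| mult2: "ac_move (r1, r2) (r1, fmult r2 r1)"
| inv1: "ac_move (r1, r2) (finv r1, r2)"
| inv2: "ac_move (r1, r2) (r1, finv r2)"
| conj1: "ac_move (r1, r2) (fmult (finv w) (fmult r1 w), r2)"
| conj2: "ac_move (r1, r2) (r1, fmult (finv w) (fmult r2 w))"

definition ac_equiv :: "word \<times> word \<Rightarrow> word \<times> word \<Rightarrow> bool" where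
  "ac_equiv p q = ac_move\<^sup>*\<^sup>* p q"

definition AK1 :: word where
  "AK1 = [(X, True), (Y, True), (X, True), (Y, False), (X, False), (Y, False)]"

definition AK2 :: "nat \<Rightarrow> word" where
  "AK2 n = replicate n (X, True) @ replicate (n + 1) (Y, False)"

end

theory Submission
  imports Defs
begin

text \<open>
  Write R(a,b) = a b a b^-1 a^-1 b^-1 and r_n(a,b) = a^n b^-(n+1), so that AK(n) is
  (R(x,y), r_n(x,y)) and its image under phi is (R(x,yx), r_n(x,yx)). An AC move may replace one
  relator by anything that is congruent, modulo the normal closure of the other relator, to a
  conjugate of the first one or of its inverse. Modulo R(a,b), conjugation by aba swaps a and b;
  this makes P = b^-1 a^-(n+1) b a^n conjugate to r_n(a,b), and P for (x,y) is conjugate to P for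
  (x,yx). Explicit group identities then link both pairs to a common pair (Q, P) by short chains
  of such moves. All of this happens in an arbitrary group; the free group,
  realised by reduced words, is only needed to read off the result for words.
\<close>

(* Group words are kept in the form a + - b, not a - b, so that group_simps normalises them. *)
declare add_uminus_conv_diff [simp del]

section \<open>Powers and conjugacy modulo a relator\<close>

fun gpow :: "'a::group_add \<Rightarrow> nat \<Rightarrow> 'a" where
  "gpow a 0 = 0"
| "gpow a (Suc k) = a + gpow a k"

lemma gpow_Suc_right: "gpow a (Suc k) = gpow a k + a"
  by (induction k) (simp_all add: add.assoc[symmetric])

lemma gpow_conj: "gpow (w + a + - w) k = w + gpow a k + - w"
  by (induction k) (simp_all add: add.assoc)

lemma gpow_commute: "a + gpow a k = gpow a k + a"
  by (simp only: gpow.simps(2)[symmetric] gpow_Suc_right)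

lemma commute_uminus:
  fixes a g :: "'a::group_add"
  assumes "a + g = g + a"
  shows "- a + g = g + - a" "a + - g = - g + a" "- a + - g = - g + - a"
proof -
  have "- a + g = - a + (g + a) + - a" by (simp add: add.assoc)
  then show 1: "- a + g = g + - a" by (simp add: assms[symmetric] add.assoc)
  have "a + - g = - g + (g + a) + - g" by (simp add: add.assoc)
  then show "a + - g = - g + a" by (simp add: assms[symmetric] add.assoc)
  show "- a + - g = - g + - a"
    using arg_cong[OF assms, of uminus] by (simp add: minus_add)
qed

lemma commute_assoc:
  fixes a g :: "'a::group_add"
  assumes "a + g = g + a"
  shows "a + (g + z) = g + (a + z)"
  by (simp add: add.assoc[symmetric] assms)

(* Oriented to move a to the right of its powers, so that simp reaches a normal form. *)
lemma gpow_commute_simps: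
  "a + gpow a k = gpow a k + a" "- a + gpow a k = gpow a k + - a"
  "a + - gpow a k = - gpow a k + a" "- a + - gpow a k = - gpow a k + - a"
  "a + (gpow a k + z) = gpow a k + (a + z)" "- a + (gpow a k + z) = gpow a k + (- a + z)"
  "a + (- gpow a k + z) = - gpow a k + (a + z)" "- a + (- gpow a k + z) = - gpow a k + (- a + z)"
  using gpow_commute[of a k] commute_uminus[OF gpow_commute[of a k]]
  by (simp_all add: commute_assoc)

lemma gpow_uminus: "gpow (- a) k = - gpow a k"
  by (induction k) (simp_all add: gpow_Suc_right minus_add gpow_commute_simps)

lemmas group_simps = add.assoc minus_add gpow_uminus gpow_commute_simps

inductive_set nclosure :: "'a::group_add \<Rightarrow> 'a set" for r where
  gen: "r \<in> nclosure r"
| zero: "0 \<in> nclosure r"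
| uminus: "u \<in> nclosure r \<Longrightarrow> - u \<in> nclosure r"
| add: "u \<in> nclosure r \<Longrightarrow> v \<in> nclosure r \<Longrightarrow> u + v \<in> nclosure r"
| conj: "u \<in> nclosure r \<Longrightarrow> w + u + - w \<in> nclosure r"

definition ncl_cong :: "'a::group_add \<Rightarrow> 'a \<Rightarrow> 'a \<Rightarrow> bool" where
  "ncl_cong r u v \<longleftrightarrow> u + - v \<in> nclosure r"

lemma ncl_cong_refl: "ncl_cong r u u"
  by (simp add: ncl_cong_def nclosure.zero)

lemma ncl_cong_sym: "ncl_cong r u v \<Longrightarrow> ncl_cong r v u"
  unfolding ncl_cong_def using nclosure.uminus by (fastforce simp: minus_add)

lemma ncl_cong_trans [trans]: "ncl_cong r u v \<Longrightarrow> ncl_cong r v t \<Longrightarrow> ncl_cong r u t"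
  unfolding ncl_cong_def using nclosure.add by (fastforce simp: add.assoc)

lemma ncl_cong_add: "ncl_cong r u v \<Longrightarrow> ncl_cong r u' v' \<Longrightarrow> ncl_cong r (u + u') (v + v')"
  unfolding ncl_cong_def
  using nclosure.add[OF nclosure.conj[where u = "u' + - v'" and w = u]]
  by (fastforce simp: group_simps)

lemma ncl_cong_uminus: "ncl_cong r u v \<Longrightarrow> ncl_cong r (- u) (- v)"
  unfolding ncl_cong_def
  using nclosure.conj[OF nclosure.uminus[where u = "u + - v"], where w = "- u"]
  by (fastforce simp: group_simps)

lemma ncl_cong_gpow: "ncl_cong r u v \<Longrightarrow> ncl_cong r (gpow u k) (gpow v k)"
  by (induction k) (simp_all add: ncl_cong_refl ncl_cong_add)

lemma ncl_cong_of_eq: "u + - v = r \<Longrightarrow> ncl_cong r u v"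
  by (simp add: ncl_cong_def nclosure.gen)

lemma ncl_cong_insert_left: "ncl_cong r (- w + r + w + v) v"
  using nclosure.conj[OF nclosure.gen, where w = "- w"] by (simp add: ncl_cong_def add.assoc)

lemma ncl_cong_insert_right: "ncl_cong r (v + (- w + r + w)) v"
  using nclosure.conj[OF nclosure.gen, where w = "v + - w"]
  by (simp add: ncl_cong_def group_simps)

lemma ncl_cong_of_relator:
  assumes "r = c + v"
  shows "ncl_cong r v (- c)"
proof -
  have "v + - (- c) = - c + r + - (- c)" by (simp add: assms add.assoc)
  then show ?thesis unfolding ncl_cong_def by (simp only: nclosure.conj nclosure.gen)
qed

definition conj_cong :: "'a::group_add \<Rightarrow> 'a \<Rightarrow> 'a \<Rightarrow> bool" where
  "conj_cong r u v \<longleftrightarrow> (\<exists>w. ncl_cong r u (- w + v + w))"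

lemma conj_congI: "ncl_cong r u (- w + v + w) \<Longrightarrow> conj_cong r u v"
  unfolding conj_cong_def by blast

lemma conj_cong_of_ncl_cong: "ncl_cong r u v \<Longrightarrow> conj_cong r u v"
  by (rule conj_congI[of _ _ 0]) simp

lemma conj_cong_conj: "conj_cong r (- w + v + w) v"
  by (rule conj_congI) (rule ncl_cong_refl)

lemma conj_cong_trans [trans]: "conj_cong r u v \<Longrightarrow> conj_cong r v t \<Longrightarrow> conj_cong r u t"
proof -
  assume "conj_cong r u v" "conj_cong r v t"
  then obtain w w' where uv: "ncl_cong r u (- w + v + w)" and vt: "ncl_cong r v (- w' + t + w')"
    unfolding conj_cong_def by blast
  have "ncl_cong r (- w + v + w) (- w + (- w' + t + w') + w)"
    using vt by (intro ncl_cong_add ncl_cong_refl)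
  with uv have "ncl_cong r u (- w + (- w' + t + w') + w)"
    by (rule ncl_cong_trans)
  then have "ncl_cong r u (- (w' + w) + t + (w' + w))"
    by (simp add: group_simps)
  then show ?thesis by (rule conj_congI)
qed

lemma ncl_cong_conj_cong_trans [trans]: "ncl_cong r u v \<Longrightarrow> conj_cong r v t \<Longrightarrow> conj_cong r u t"
  using conj_cong_of_ncl_cong conj_cong_trans by blast

lemma conj_cong_ncl_cong_trans [trans]: "conj_cong r u v \<Longrightarrow> ncl_cong r v t \<Longrightarrow> conj_cong r u t"
  using conj_cong_of_ncl_cong conj_cong_trans by blast

lemma conj_cong_rotate: "conj_cong r (a + b) (b + a)"
  using conj_cong_conj[of r b "b + a"] by (simp add: add.assoc)

section \<open>Andrews--Curtis moves in a group\<close>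

lemma rtranclp_map:
  assumes "\<And>x y. R x y \<Longrightarrow> S (f x) (f y)"
  shows "R\<^sup>*\<^sup>* x y \<Longrightarrow> S\<^sup>*\<^sup>* (f x) (f y)"
  by (induction rule: rtranclp_induct) (auto intro: rtranclp.rtrancl_into_rtrancl assms)

inductive ac_step :: "'a::group_add \<times> 'a \<Rightarrow> 'a \<times> 'a \<Rightarrow> bool" where
  mult1: "ac_step (a, b) (a + b, b)"
| mult2: "ac_step (a, b) (a, b + a)"
| inv1: "ac_step (a, b) (- a, b)"
| inv2: "ac_step (a, b) (a, - b)"
| conj1: "ac_step (a, b) (- w + (a + w), b)"
| conj2: "ac_step (a, b) (a, - w + (b + w))"

lemma ac_step_swap: "ac_step p q \<Longrightarrow> ac_step (prod.swap p) (prod.swap q)"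
  by (induction rule: ac_step.induct) (auto intro: ac_step.intros)

lemma ac_swap: "ac_step\<^sup>*\<^sup>* (a, b) (c, d) \<Longrightarrow> ac_step\<^sup>*\<^sup>* (b, a) (d, c)"
  using rtranclp_map[of ac_step ac_step prod.swap, OF ac_step_swap] by fastforce

lemma ac_mult1_reverse: "ac_step\<^sup>*\<^sup>* (a + b, b) (a, b)"
proof -
  have "ac_step\<^sup>*\<^sup>* (a + b, b) (a + b, - b)" by (intro r_into_rtranclp ac_step.inv2)
  also have "ac_step\<^sup>*\<^sup>* \<dots> (a + b + - b, - b)" by (intro r_into_rtranclp ac_step.mult1)
  also have "ac_step\<^sup>*\<^sup>* \<dots> (a + b + - b, - (- b))" by (intro r_into_rtranclp ac_step.inv2)
  finally show ?thesis by (simp add: add.assoc)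
qed

lemma ac_step_reverse: "ac_step p q \<Longrightarrow> ac_step\<^sup>*\<^sup>* q p"
proof (induction rule: ac_step.induct)
  case (mult1 a b)
  show ?case by (rule ac_mult1_reverse)
next
  case (mult2 a b)
  show ?case by (rule ac_swap[OF ac_mult1_reverse])
next
  case (inv1 a b)
  show ?case using ac_step.inv1[of "- a" b] by (simp add: r_into_rtranclp)
next
  case (inv2 a b)
  show ?case using ac_step.inv2[of a "- b"] by (simp add: r_into_rtranclp)
next
  case (conj1 a b w)
  have "ac_step (- w + (a + w), b) (- (- w) + ((- w + (a + w)) + - w), b)" by (rule ac_step.conj1)
  then show ?case by (simp add: add.assoc r_into_rtranclp)
next
  case (conj2 a b w)
  have "ac_step (a, - w + (b + w)) (a, - (- w) + ((- w + (b + w)) + - w))" by (rule ac_step.conj2)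
  then show ?case by (simp add: add.assoc r_into_rtranclp)
qed

lemma ac_sym: "ac_step\<^sup>*\<^sup>* p q \<Longrightarrow> ac_step\<^sup>*\<^sup>* q p"
  by (induction rule: rtranclp_induct) (auto dest: ac_step_reverse intro: rtranclp_trans)

lemma ac_mult_nclosure: "u \<in> nclosure a \<Longrightarrow> ac_step\<^sup>*\<^sup>* (a, b) (a, b + u)"
proof (induction u arbitrary: b rule: nclosure.induct)
  case gen
  show ?case by (intro r_into_rtranclp ac_step.mult2)
next
  case zero
  show ?case by simp
next
  case (uminus u)
  from uminus.IH[of "b + - u"] show ?case by (simp add: add.assoc ac_sym)
next
  case (add u v)
  from add.IH(1)[of b] add.IH(2)[of "b + u"] show ?case
    by (simp add: add.assoc)
next
  case (conj u w)
  have "ac_step\<^sup>*\<^sup>* (a, b) (a, - w + (b + w))"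
    by (intro r_into_rtranclp ac_step.conj2)
  also have "ac_step\<^sup>*\<^sup>* \<dots> (a, - w + (b + w) + u)"
    by (rule conj.IH)
  also have "ac_step\<^sup>*\<^sup>* \<dots> (a, - (- w) + ((- w + (b + w) + u) + - w))"
    by (intro r_into_rtranclp ac_step.conj2)
  finally show ?case by (simp add: add.assoc)
qed

lemma ac_second_conj_cong:
  assumes "conj_cong a b' b"
  shows "ac_step\<^sup>*\<^sup>* (a, b) (a, b')"
proof -
  obtain w where "ncl_cong a b' (- w + b + w)"
    using assms by (auto simp: conj_cong_def)
  then have "- (- w + b + w) + (b' + - (- w + b + w)) + - (- (- w + b + w)) \<in> nclosure a"
    unfolding ncl_cong_def by (rule nclosure.conj)
  then have "- (- w + b + w) + b' \<in> nclosure a"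
    by (simp add: add.assoc)
  have "ac_step\<^sup>*\<^sup>* (a, b) (a, - w + b + w)"
    using ac_step.conj2[of a b w] by (simp add: add.assoc r_into_rtranclp)
  also have "ac_step\<^sup>*\<^sup>* \<dots> (a, (- w + b + w) + (- (- w + b + w) + b'))"
    by (rule ac_mult_nclosure) fact
  finally show ?thesis by (simp add: add.assoc)
qed

lemma ac_second_conj_cong_uminus: "conj_cong a b' (- b) \<Longrightarrow> ac_step\<^sup>*\<^sup>* (a, b) (a, b')"
  using converse_rtranclp_into_rtranclp[OF ac_step.inv2 ac_second_conj_cong] .

lemma ac_first_conj_cong: "conj_cong b a' a \<Longrightarrow> ac_step\<^sup>*\<^sup>* (a, b) (a', b)"
  using ac_swap[OF ac_second_conj_cong] .

lemma ac_first_conj_cong_uminus: "conj_cong b a' (- a) \<Longrightarrow> ac_step\<^sup>*\<^sup>* (a, b) (a', b)"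
  using ac_swap[OF ac_second_conj_cong_uminus] .

lemma ac_swap_components: "ac_step\<^sup>*\<^sup>* (a, b) (b, a)"
proof -
  have "ac_step\<^sup>*\<^sup>* (a, b) (a + b, b)"
    by (intro r_into_rtranclp ac_step.mult1)
  also have "ac_step\<^sup>*\<^sup>* \<dots> (a + b, a)"
    by (intro ac_second_conj_cong_uminus conj_cong_of_ncl_cong ncl_cong_of_eq) simp
  also have "ac_step\<^sup>*\<^sup>* \<dots> (b, a)"
    by (intro ac_first_conj_cong conj_cong_of_ncl_cong ncl_cong_sym[OF ncl_cong_of_eq])
      (simp add: group_simps)
  finally show ?thesis .
qed

section \<open>The Akbulut--Kirby pairs in a group\<close>

definition braid_rel :: "'a::group_add \<Rightarrow> 'a \<Rightarrow> 'a" where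
  "braid_rel a b = a + b + a + - b + - a + - b"

definition power_rel :: "nat \<Rightarrow> 'a::group_add \<Rightarrow> 'a \<Rightarrow> 'a" where
  "power_rel n a b = gpow a n + gpow (- b) (Suc n)"

definition twist :: "nat \<Rightarrow> 'a::group_add \<Rightarrow> 'a \<Rightarrow> 'a" where
  "twist n a b = - b + gpow (- a) (Suc n) + b + gpow a n"

lemma braid_rel_swap:
  fixes a b :: "'a::group_add"
  defines "D \<equiv> a + b + a"
  shows "ncl_cong (braid_rel a b) (gpow a k) (D + gpow b k + - D)"
    and "ncl_cong (braid_rel a b) (gpow b k) (D + gpow a k + - D)"
proof -
  let ?R = "braid_rel a b"
  have braid: "ncl_cong ?R D (b + a + b)"
    by (rule ncl_cong_of_eq) (simp add: braid_rel_def D_def group_simps)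
  have "ncl_cong ?R (a + D + - D) (a + (b + a + b) + - D)"
    by (intro ncl_cong_add ncl_cong_refl braid)
  then have "ncl_cong ?R a (D + b + - D)"
    by (simp add: D_def group_simps)
  from ncl_cong_gpow[OF this] show "ncl_cong ?R (gpow a k) (D + gpow b k + - D)"
    by (simp only: gpow_conj)
  have "ncl_cong ?R (D + a + - D) (b + a + b + a + - D)"
    by (intro ncl_cong_add ncl_cong_refl braid)
  then have "ncl_cong ?R (D + a + - D) b"
    by (simp add: D_def group_simps)
  from ncl_cong_gpow[OF ncl_cong_sym[OF this]] show "ncl_cong ?R (gpow b k) (D + gpow a k + - D)"
    by (simp only: gpow_conj)
qed

lemma braid_rel_conj_gpow:
  "ncl_cong (braid_rel a b) (b + gpow a k + - b) (- a + gpow b k + a)"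
proof -
  have "b + a + - b = - a + braid_rel a b + a + (- a + b + - (- a))"
    by (simp add: braid_rel_def group_simps)
  then have "ncl_cong (braid_rel a b) (b + a + - b) (- a + b + - (- a))"
    by (simp only: ncl_cong_insert_left)
  from ncl_cong_gpow[OF this, of k, unfolded gpow_conj] show ?thesis
    by (simp only: minus_minus)
qed

lemma twist_conj_cong_power_rel: "conj_cong (braid_rel a b) (twist n a b) (power_rel n a b)"
proof -
  let ?R = "braid_rel a b" and ?D = "a + b + a"
  have "twist n a b = - b + - gpow a (Suc n) + (b + gpow a n + - b) + b"
    by (simp add: twist_def group_simps)
  also have "ncl_cong ?R \<dots> (- b + - gpow a (Suc n) + (- a + gpow b n + a) + b)"
    by (intro ncl_cong_add ncl_cong_refl braid_rel_conj_gpow)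
  also have "\<dots> = - (a + b) + (- gpow a (Suc n) + gpow b n) + (a + b)"
    by (simp add: group_simps)
  also have "conj_cong ?R \<dots> (- gpow a (Suc n) + gpow b n)"
    by (rule conj_cong_conj)
  also have "ncl_cong ?R \<dots> (- (?D + gpow b (Suc n) + - ?D) + (?D + gpow a n + - ?D))"
    by (intro ncl_cong_add ncl_cong_uminus braid_rel_swap)
  also have "\<dots> = - (- ?D) + (gpow (- b) (Suc n) + gpow a n) + - ?D"
    by (simp add: group_simps)
  also have "conj_cong ?R \<dots> (gpow (- b) (Suc n) + gpow a n)"
    by (rule conj_cong_conj)
  also have "conj_cong ?R \<dots> (power_rel n a b)"
    unfolding power_rel_def by (rule conj_cong_rotate)
  finally show ?thesis .
qed

definition pivot_rel :: "nat \<Rightarrow> 'a::group_add \<Rightarrow> 'a \<Rightarrow> 'a" where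
  "pivot_rel n a b = - b + - a + - a + - b + gpow (- a) n + b + gpow a (Suc n)"

lemma ac_power_rel_pivot:
  "ac_step\<^sup>*\<^sup>* (braid_rel a b, power_rel n a b) (pivot_rel n a b, twist n a b)"
proof -
  let ?R = "braid_rel a b" and ?P = "twist n a b" and ?Q = "pivot_rel n a b"
  define T where "T = - b + gpow (- a) n + b + a + - b + - a + gpow a n"
  have T_R: "T = - (gpow a (Suc n) + b) + ?R + (gpow a (Suc n) + b) + ?P"
    by (simp add: T_def braid_rel_def twist_def group_simps)
  have Q_T: "?Q = - (a + a + b) + T + (a + a + b) + ?P"
    by (simp add: pivot_rel_def T_def twist_def group_simps)
  have "ac_step\<^sup>*\<^sup>* (?R, power_rel n a b) (?R, T)"
  proof (rule ac_second_conj_cong)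
    have "ncl_cong ?R T ?P"
      unfolding T_R by (rule ncl_cong_insert_left)
    also have "conj_cong ?R ?P (power_rel n a b)"
      by (rule twist_conj_cong_power_rel)
    finally show "conj_cong ?R T (power_rel n a b)" .
  qed
  also have "ac_step\<^sup>*\<^sup>* \<dots> (?P, T)"
  proof (rule ac_first_conj_cong_uminus)
    have "ncl_cong T ?P (- (- (gpow a (Suc n) + b) + ?R + (gpow a (Suc n) + b)))"
      using T_R by (rule ncl_cong_of_relator)
    then have "ncl_cong T ?P (- (gpow a (Suc n) + b) + - ?R + (gpow a (Suc n) + b))"
      by (simp only: minus_add minus_minus add.assoc)
    then show "conj_cong T ?P (- ?R)"
      by (rule conj_congI)
  qed
  also have "ac_step\<^sup>*\<^sup>* \<dots> (?P, ?Q)"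
    using ncl_cong_insert_right[of ?P "- (a + a + b) + T + (a + a + b)" 0]
    by (intro ac_second_conj_cong conj_congI[where w = "a + a + b"]) (simp add: Q_T)
  also have "ac_step\<^sup>*\<^sup>* \<dots> (?Q, ?P)"
    by (rule ac_swap_components)
  finally show ?thesis .
qed

lemma ac_power_rel_subst_pivot:
  "ac_step\<^sup>*\<^sup>* (braid_rel a (b + a), power_rel n a (b + a)) (pivot_rel n a b, twist n a b)"
proof -
  let ?R' = "braid_rel a (b + a)" and ?P = "twist n a b" and ?Q = "pivot_rel n a b"
  have Q_R': "?Q = - (a + b + a) + ?R' + (a + b + a) + (- a + ?P + a)"
    by (simp add: pivot_rel_def braid_rel_def twist_def group_simps)
  have twist_subst: "?P = - (- a) + twist n a (b + a) + - a"
    by (simp add: twist_def group_simps)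
  have "ac_step\<^sup>*\<^sup>* (?R', power_rel n a (b + a)) (?R', ?P)"
  proof (rule ac_second_conj_cong)
    have "conj_cong ?R' ?P (twist n a (b + a))"
      unfolding twist_subst by (rule conj_cong_conj)
    also have "conj_cong ?R' \<dots> (power_rel n a (b + a))"
      by (rule twist_conj_cong_power_rel)
    finally show "conj_cong ?R' ?P (power_rel n a (b + a))" .
  qed
  also have "ac_step\<^sup>*\<^sup>* \<dots> (?Q, ?P)"
    using ncl_cong_insert_right[of ?P "- (a + b + a) + ?R' + (a + b + a)" a]
    by (intro ac_first_conj_cong conj_congI[where w = "a + b + a"]) (simp add: Q_R')
  finally show ?thesis .
qed

lemma ac_braid_power_rel_subst:
  "ac_step\<^sup>*\<^sup>* (braid_rel a (b + a), power_rel n a (b + a)) (braid_rel a b, power_rel n a b)"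
  using ac_power_rel_subst_pivot ac_sym[OF ac_power_rel_pivot] by (rule rtranclp_trans)

section \<open>The free group on two generators\<close>

definition inv_letter :: "letter \<Rightarrow> letter" where
  "inv_letter l = (fst l, \<not> snd l)"

definition inv_word :: "word \<Rightarrow> word" where
  "inv_word w = rev (map inv_letter w)"

lemma inv_letter_inv_letter [simp]: "inv_letter (inv_letter a) = a"
  by (simp add: inv_letter_def)

lemma inv_word_Nil [simp]: "inv_word [] = []"
  and inv_word_Cons [simp]: "inv_word (a # w) = inv_word w @ [inv_letter a]"
  and inv_word_inv_word [simp]: "inv_word (inv_word w) = w"
  by (simp_all add: inv_word_def rev_map[symmetric] comp_def)

fun reduced :: "word \<Rightarrow> bool" where
  "reduced [] = True"
| "reduced [a] = True"
| "reduced (a # b # w) = (\<not> (fst a = fst b \<and> snd a \<noteq> snd b) \<and> reduced (b # w))"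

lemma reduced_ConsD: "reduced (a # w) \<Longrightarrow> reduced w"
  by (cases w) auto

lemma reduced_push: "reduced w \<Longrightarrow> reduced (push a w)"
  by (cases w) (auto dest: reduced_ConsD)

lemma reduced_foldr_push: "reduced w \<Longrightarrow> reduced (foldr push u w)"
  by (induction u) (auto intro: reduced_push)

lemma reduced_red: "reduced (red w)"
  unfolding red_def by (rule reduced_foldr_push) simp

lemma push_inv_letter_push: "reduced w \<Longrightarrow> push (inv_letter a) (push a w) = w"
  by (cases w rule: reduced.cases) (auto simp: inv_letter_def prod_eq_iff)

lemma red_reduced: "reduced w \<Longrightarrow> red w = w"
proof (induction w)
  case Nil
  then show ?case by (simp add: red_def)
next
  case (Cons a w)
  then show ?case
    by (cases w) (auto simp: red_def dest: reduced_ConsD)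
qed

lemma red_red [simp]: "red (red w) = red w"
  by (rule red_reduced[OF reduced_red])

lemma red_Nil: "red [] = []"
  by (simp add: red_def)

lemma red_Cons: "red (a # w) = push a (red w)"
  by (simp add: red_def)

lemma red_append: "red (u @ v) = foldr push u (red v)"
  by (simp add: red_def)

lemma foldr_push_push:
  assumes "reduced w" "reduced z"
  shows "foldr push (push a w) z = push a (foldr push w z)"
proof (cases w)
  case (Cons b w')
  show ?thesis
  proof (cases "fst a = fst b \<and> snd a \<noteq> snd b")
    case True
    then have "a = inv_letter b" by (cases a, cases b) (auto simp: inv_letter_def)
    moreover have "reduced (foldr push w' z)"
      using assms Cons by (auto intro: reduced_foldr_push dest: reduced_ConsD)
    ultimately show ?thesis using Cons True by (simp add: push_inv_letter_push)
  qed (use Cons in auto)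
qed simp

lemma foldr_push_red: "reduced z \<Longrightarrow> foldr push (red u) z = foldr push u z"
proof (induction u)
  case (Cons a u)
  then show ?case
    using foldr_push_push[OF reduced_red Cons.prems, of a u] by (simp add: red_def)
qed (simp add: red_def)

lemma red_red_append [simp]: "red (red u @ v) = red (u @ v)"
  by (simp add: red_append foldr_push_red reduced_red)

lemma red_append_red [simp]: "red (u @ red v) = red (u @ v)"
  by (simp add: red_append)

lemma red_inv_word_append_cancel: "red (inv_word u @ u @ v) = red v"
proof (induction u arbitrary: v)
  case (Cons a u)
  have "red (inv_word (a # u) @ (a # u) @ v)
      = foldr push (inv_word u) (push (inv_letter a) (push a (red (u @ v))))"
    by (simp add: red_append red_Cons)
  also have "\<dots> = foldr push (inv_word u) (red (u @ v))"
    by (simp only: push_inv_letter_push[OF reduced_red])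
  also have "\<dots> = red (inv_word u @ u @ v)"
    by (simp only: red_append)
  finally show ?case using Cons by simp
qed simp

lemma red_append_inv_word: "red (u @ inv_word u) = []"
  using red_inv_word_append_cancel[of "inv_word u" "[]"] by (simp add: red_Nil)

lemma red_inv_word_red: "red (inv_word (red w)) = red (inv_word w)"
proof -
  have "red (inv_word w) = red (inv_word w @ red (red w @ inv_word (red w)))"
    by (simp only: red_append_inv_word append_Nil2)
  also have "\<dots> = red (inv_word w @ w @ inv_word (red w))"
    by (metis red_append_red red_red_append)
  also have "\<dots> = red (inv_word (red w))"
    by (rule red_inv_word_append_cancel)
  finally show ?thesis by simp
qed

typedef fgroup = "{w. red w = w}" morphisms word_of Abs_fgroup
  by (rule exI[of _ "[]"]) (simp add: red_Nil)

lemma red_word_of [simp]: "red (word_of a) = word_of a"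
  using word_of[of a] by simp

lemma word_of_Abs_fgroup_red [simp]: "word_of (Abs_fgroup (red w)) = red w"
  by (simp add: Abs_fgroup_inverse)

instantiation fgroup :: group_add
begin

definition "0 = Abs_fgroup []"
definition "a + b = Abs_fgroup (red (word_of a @ word_of b))"
definition "- a = Abs_fgroup (red (inv_word (word_of a)))"
definition "a - b = a + - (b :: fgroup)"

instance
proof
  fix a b c :: fgroup
  have word_of_0: "word_of 0 = []"
    using word_of_Abs_fgroup_red[of "[]"] by (simp add: zero_fgroup_def red_Nil)
  show "a + b + c = a + (b + c)"
    by (simp add: plus_fgroup_def)
  show "0 + a = a" "a + 0 = a"
    by (simp_all add: plus_fgroup_def word_of_0 word_of_inverse)
  show "- a + a = 0"
    using red_inv_word_append_cancel[of "word_of a" "[]"]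
    by (simp add: plus_fgroup_def uminus_fgroup_def zero_fgroup_def red_Nil)
  show "a + - b = a - b"
    by (simp add: minus_fgroup_def)
qed

end

definition fg_of_word :: "word \<Rightarrow> fgroup" where
  "fg_of_word w = Abs_fgroup (red w)"

lemma word_of_fg_of_word: "word_of (fg_of_word w) = red w"
  by (simp add: fg_of_word_def)

lemma fg_of_word_Nil: "fg_of_word [] = 0"
  by (simp add: fg_of_word_def zero_fgroup_def red_Nil)

lemma fg_of_word_append: "fg_of_word (u @ v) = fg_of_word u + fg_of_word v"
  by (simp add: fg_of_word_def plus_fgroup_def)

lemma fg_of_word_Cons: "fg_of_word (a # w) = fg_of_word [a] + fg_of_word w"
  using fg_of_word_append[of "[a]" w] by simp

lemma fg_of_word_inv_letter: "fg_of_word [inv_letter a] = - fg_of_word [a]"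
  by (simp add: fg_of_word_def uminus_fgroup_def red_inv_word_red)

lemma word_of_plus: "word_of (a + b) = fmult (word_of a) (word_of b)"
  by (simp add: plus_fgroup_def fmult_def)

lemma word_of_uminus: "word_of (- a) = finv (word_of a)"
proof -
  have "(\<lambda>(g, s). (g, \<not> s)) = inv_letter" by (auto simp: inv_letter_def)
  then show ?thesis by (simp add: uminus_fgroup_def finv_def inv_word_def)
qed

lemma ac_move_word_of:
  "ac_step p q \<Longrightarrow> ac_move (map_prod word_of word_of p) (map_prod word_of word_of q)"
  by (induction rule: ac_step.induct) (simp_all add: word_of_plus word_of_uminus ac_move.intros)

lemma ac_equiv_word_of:
  "ac_step\<^sup>*\<^sup>* (a, b) (c, d) \<Longrightarrow> ac_equiv (word_of a, word_of b) (word_of c, word_of d)"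
  using rtranclp_map[of ac_step ac_move "map_prod word_of word_of", OF ac_move_word_of]
  by (fastforce simp: ac_equiv_def)

section \<open>AK(n) and its image under phi as reduced words\<close>

lemma fg_of_word_neg_letter: "fg_of_word [(g, False)] = - fg_of_word [(g, True)]"
  using fg_of_word_inv_letter[of "(g, True)"] by (simp add: inv_letter_def)

lemma fg_of_word_replicate: "fg_of_word (replicate k a) = gpow (fg_of_word [a]) k"
proof (induction k)
  case (Suc k)
  have "fg_of_word (replicate (Suc k) a) = fg_of_word ([a] @ replicate k a)" by simp
  then show ?case using Suc by (simp only: fg_of_word_append gpow.simps)
qed (simp add: fg_of_word_Nil)

lemma fg_of_word_concat_replicate: "fg_of_word (concat (replicate k u)) = gpow (fg_of_word u) k"
  by (induction k) (simp_all add: fg_of_word_Nil fg_of_word_append)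

lemma reduced_replicate_append:
  assumes "reduced w" "\<And>b w'. w = b # w' \<Longrightarrow> fst b \<noteq> fst a"
  shows "reduced (replicate k a @ w)"
proof (induction k)
  case (Suc k)
  then show ?case using assms by (cases k; cases w) auto
qed (use assms in simp)

lemma reduced_replicate: "reduced (replicate k a)"
  using reduced_replicate_append[of "[]"] by simp

lemma AK1_eq: "AK1 = word_of (braid_rel (fg_of_word gx) (fg_of_word gy))"
proof -
  have "fg_of_word AK1 = braid_rel (fg_of_word gx) (fg_of_word gy)"
    by (simp add: AK1_def braid_rel_def gx_def gy_def fg_of_word_Cons[of _ "_ # _"]
        fg_of_word_neg_letter add.assoc)
  moreover have "red AK1 = AK1"
    by (simp add: AK1_def red_reduced)
  ultimately show ?thesis by (metis word_of_fg_of_word)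
qed

lemma AK2_eq: "AK2 n = word_of (power_rel n (fg_of_word gx) (fg_of_word gy))"
proof -
  have "fg_of_word (AK2 n) = power_rel n (fg_of_word gx) (fg_of_word gy)"
    by (simp add: AK2_def power_rel_def gx_def gy_def fg_of_word_append fg_of_word_replicate
        fg_of_word_neg_letter gpow_uminus del: replicate.simps)
  moreover have "reduced (AK2 n)"
    unfolding AK2_def by (intro reduced_replicate_append reduced_replicate) auto
  ultimately show ?thesis by (metis word_of_fg_of_word red_reduced)
qed

lemma phi_AK1: "phi AK1 = word_of (braid_rel (fg_of_word gx) (fg_of_word gy + fg_of_word gx))"
proof -
  have "fg_of_word (concat (map phi_letter AK1))
      = braid_rel (fg_of_word gx) (fg_of_word gy + fg_of_word gx)"
    by (simp add: AK1_def braid_rel_def gx_def gy_def fg_of_word_Cons[of _ "_ # _"]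
        fg_of_word_neg_letter group_simps)
  then show ?thesis by (simp add: phi_def word_of_fg_of_word[symmetric])
qed

lemma phi_AK2: "phi (AK2 n) = word_of (power_rel n (fg_of_word gx) (fg_of_word gy + fg_of_word gx))"
proof -
  have "fg_of_word (concat (map phi_letter (AK2 n)))
      = power_rel n (fg_of_word gx) (fg_of_word gy + fg_of_word gx)"
    by (simp add: AK2_def power_rel_def gx_def gy_def map_replicate fg_of_word_append
        fg_of_word_concat_replicate fg_of_word_replicate fg_of_word_Cons[of _ "_ # _"]
        fg_of_word_neg_letter minus_add del: replicate.simps)
  then show ?thesis by (simp add: phi_def word_of_fg_of_word[symmetric])
qed

theorem lemma6:
  fixes n :: nat
  assumes "n \<ge> 3"
  shows "ac_equiv (phi AK1, phi (AK2 n)) (AK1, AK2 n)"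
  \<comment> \<open>The argument works for every n.\<close>
  unfolding phi_AK1 phi_AK2
  unfolding AK1_eq AK2_eq
  by (intro ac_equiv_word_of ac_braid_power_rel_subst)

end
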